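(* Let $K_n$ denote the number of fully heterochronous ranked tree shapes with $n$ leaves. Then $K_1=K_2=1$ and, for every $n\ge 3$, $$K_n=\frac12\sum_{\ell=1}^{n-1}\binom{2n-2}{2\ell-1}K_\ell K_{n-\ell}.$$
   Context: A fully heterochronous ranked tree shape with $n$ leaves is a rooted full binary tree (every node has out-degree $0$ or $2$), without leaf labels, with $n$ leaves, together with a total ordering of all $2n-1$ nodes (leaves included) such that nodes appear in increasing order along every path from the root to a leaf. Two such objects are considered the same if there is an isomorphism of rooted trees preserving the total order. *)

theory Defs
  imports Complex_Main
begin

text \<open>A ranked tree is given by a finite node set V (nodes named by naturals),
  a set E of parent-child edges, and a rank function rk encoding the total
  order on V (u precedes v iff rk u < rk v).\<close>

type_synonym rtree = "nat set \<times> (nat \<times> nat) set \<times> (nat \<Rightarrow> nat)"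

definition children :: "(nat \<times> nat) set \<Rightarrow> nat \<Rightarrow> nat set" where
  "children E v = {c. (v, c) \<in> E}"

definition fhrts :: "nat \<Rightarrow> rtree \<Rightarrow> bool" where
  "fhrts n T = (case T of (V, E, rk) \<Rightarrow>
     finite V \<and> E \<subseteq> V \<times> V \<and>
     (\<exists>\<rho>\<in>V. (\<forall>u. (u, \<rho>) \<notin> E) \<and>
             (\<forall>v\<in>V. v \<noteq> \<rho> \<longrightarrow> (\<exists>!u. (u, v) \<in> E)) \<and>
             (\<forall>v\<in>V. (\<rho>, v) \<in> E\<^sup>*)) \<and>
     (\<forall>v\<in>V. card (children E v) = 0 \<or> card (children E v) = 2) \<and>
     card {v\<in>V. children E v = {}} = n \<and>
     bij_betw rk V {0..<card V} \<and>
     (\<forall>(u, v)\<in>E. rk u < rk v))"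

definition rt_iso :: "rtree \<Rightarrow> rtree \<Rightarrow> bool" where
  "rt_iso S T = (case S of (V1, E1, rk1) \<Rightarrow> case T of (V2, E2, rk2) \<Rightarrow>
     (\<exists>f. bij_betw f V1 V2 \<and>
          (\<forall>u\<in>V1. \<forall>v\<in>V1. ((u, v) \<in> E1 \<longleftrightarrow> (f u, f v) \<in> E2)) \<and>
          (\<forall>u\<in>V1. \<forall>v\<in>V1. (rk1 u < rk1 v \<longleftrightarrow> rk2 (f u) < rk2 (f v)))))"

definition K :: "nat \<Rightarrow> nat" where
  "K n = card ({T. fhrts n T} // {(S, T). fhrts n S \<and> fhrts n T \<and> rt_iso S T})"

end

(*
  Relabelling the nodes of a ranked tree shape by their ranks gives a canonical representative
  of its isomorphism class, so K n counts the increasing full binary trees on {0..<2n-1}: those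
  whose labels increase along every edge. The root of an increasing tree carries the least label,
  and its two subtrees are increasing trees on complementary subsets of the remaining labels;
  conversely, any two such trees can be joined below a new least label. The number c k of
  increasing trees on k labels depends only on k, so counting the splittings of the non-root
  labels gives 2 c (m + 1) = (sum j <= m. (m choose j) c j c (m - j)), where the factor 2 comes
  from the two subtrees being unordered. A full binary tree has an odd number of nodes, so only
  odd j contribute, and with K n = c (2n - 1) this is the stated recursion.
*)
theory Submission
  imports Defs "HOL-Library.Infinite_Set"
begin

lemma map_prod_mem_image_iff:
  assumes "inj_on h V" "E \<subseteq> V \<times> V" "a \<in> V" "b \<in> V"
  shows "(h a, h b) \<in> map_prod h h ` E \<longleftrightarrow> (a, b) \<in> E"
  using inj_on_image_mem_iff[OF map_prod_inj_on[OF assms(1,1)], of "(a, b)" E] assms(2-4) by simp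

lemma children_map_prod_image:
  assumes "inj_on h V" "E \<subseteq> V \<times> V" "v \<in> V"
  shows "children (map_prod h h ` E) (h v) = h ` children E v"
  using assms by (force simp: children_def dest: inj_onD)

lemma rtrancl_map_prod_image: "(a, b) \<in> E\<^sup>* \<Longrightarrow> (h a, h b) \<in> (map_prod h h ` E)\<^sup>*"
  by (induction rule: rtrancl_induct) (force intro: rtrancl_into_rtrancl)+

lemma ex1_parent_map_prod_image:
  assumes inj: "inj_on h V" and sub: "E \<subseteq> V \<times> V" and v: "v \<in> V" and parent: "\<exists>!u. (u, v) \<in> E"
  shows "\<exists>!u. (u, h v) \<in> map_prod h h ` E"
proof -
  obtain u where u: "(u, v) \<in> E" and uniq: "\<And>u'. (u', v) \<in> E \<Longrightarrow> u' = u"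
    using parent by blast
  show ?thesis
  proof (rule ex1I[of _ "h u"])
    show "(h u, h v) \<in> map_prod h h ` E" using u by force
    show "x = h u" if "(x, h v) \<in> map_prod h h ` E" for x
    proof -
      from that obtain a b where ab: "(a, b) \<in> E" "x = h a" "h v = h b" by auto
      then have "b = v" using inj_onD[OF inj ab(3)[symmetric]] sub v by blast
      then show ?thesis using uniq ab by blast
    qed
  qed
qed

lemma rtrancl_le_if_increasing:
  fixes E :: "('a::order \<times> 'a) set"
  shows "(a, b) \<in> E\<^sup>* \<Longrightarrow> \<forall>(u, v)\<in>E. u < v \<Longrightarrow> a \<le> b"
  by (induction rule: rtrancl_induct) fastforce+

lemma rtrancl_Image_subset: "E \<subseteq> L \<times> L \<Longrightarrow> c \<in> L \<Longrightarrow> E\<^sup>* `` {c} \<subseteq> L"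
  using Image_closed_trancl[of E L] by blast

lemma rtrancl_into_rtrancl_Restr_descendants:
  "(c, v) \<in> E\<^sup>* \<Longrightarrow> (c, v) \<in> (E \<inter> (E\<^sup>* `` {c}) \<times> (E\<^sup>* `` {c}))\<^sup>*"
proof (induction rule: rtrancl_induct)
  case (step y z)
  then have "(y, z) \<in> E \<inter> (E\<^sup>* `` {c}) \<times> (E\<^sup>* `` {c})" by (auto intro: rtrancl_into_rtrancl)
  with step.IH show ?case by (rule rtrancl_into_rtrancl)
qed simp

lemma children_restrict_closed:
  assumes "E `` D \<subseteq> D" "v \<in> D"
  shows "children (E \<inter> D \<times> D) v = children E v"
  using assms by (auto simp: children_def)

lemma card_leaves_insert_Un:
  assumes "finite A" "finite B" "A \<inter> B = {}" "children E r \<noteq> {}"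
  shows "card {v \<in> insert r (A \<union> B). children E v = {}} =
    card {v\<in>A. children E v = {}} + card {v\<in>B. children E v = {}}"
proof -
  have "{v \<in> insert r (A \<union> B). children E v = {}} =
      {v\<in>A. children E v = {}} \<union> {v\<in>B. children E v = {}}"
    using assms(4) by auto
  then show ?thesis using assms(1-3) by (simp add: card_Un_disjoint disjoint_iff)
qed

lemma edges_decompose_at_root:
  assumes "E \<subseteq> L \<times> L" "L = insert r (A \<union> B)" "E `` A \<subseteq> A" "E `` B \<subseteq> B"
    and "children E r = {a, b}"
  shows "E = E \<inter> A \<times> A \<union> E \<inter> B \<times> B \<union> {(r, a), (r, b)}"
proof
  show "E \<subseteq> E \<inter> A \<times> A \<union> E \<inter> B \<times> B \<union> {(r, a), (r, b)}"
  proof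
    fix e assume "e \<in> E"
    then obtain u v where e: "e = (u, v)" "(u, v) \<in> E" by (cases e) auto
    then consider "u = r" | "u \<in> A" | "u \<in> B" using assms(1,2) by auto
    then show "e \<in> E \<inter> A \<times> A \<union> E \<inter> B \<times> B \<union> {(r, a), (r, b)}"
      using e assms(3-5) by cases (auto simp: children_def)
  qed
  show "E \<inter> A \<times> A \<union> E \<inter> B \<times> B \<union> {(r, a), (r, b)} \<subseteq> E"
    using assms(5) by (auto simp: children_def)
qed

section \<open>Full binary trees\<close>

definition full_binary_tree :: "nat set \<Rightarrow> (nat \<times> nat) set \<Rightarrow> nat \<Rightarrow> bool" where
  "full_binary_tree V E n \<longleftrightarrow> finite V \<and> E \<subseteq> V \<times> V \<and>
     (\<exists>\<rho>\<in>V. (\<forall>u. (u, \<rho>) \<notin> E) \<and> (\<forall>v\<in>V. v \<noteq> \<rho> \<longrightarrow> (\<exists>!u. (u, v) \<in> E)) \<and>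
             (\<forall>v\<in>V. (\<rho>, v) \<in> E\<^sup>*)) \<and>
     (\<forall>v\<in>V. card (children E v) = 0 \<or> card (children E v) = 2) \<and>
     card {v\<in>V. children E v = {}} = n"

lemma fhrts_iff:
  "fhrts n (V, E, rk) \<longleftrightarrow>
     full_binary_tree V E n \<and> bij_betw rk V {0..<card V} \<and> (\<forall>(u, v)\<in>E. rk u < rk v)"
  unfolding fhrts_def full_binary_tree_def by auto

lemma full_binary_tree_image:
  assumes inj: "inj_on h V" and T: "full_binary_tree V E n"
  shows "full_binary_tree (h ` V) (map_prod h h ` E) n"
proof -
  define F where "F = map_prod h h ` E"
  from T obtain \<rho> where fin: "finite V" and sub: "E \<subseteq> V \<times> V" and \<rho>: "\<rho> \<in> V"
    and no_parent: "\<forall>u. (u, \<rho>) \<notin> E" and parent: "\<forall>v\<in>V. v \<noteq> \<rho> \<longrightarrow> (\<exists>!u. (u, v) \<in> E)"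
    and reach: "\<forall>v\<in>V. (\<rho>, v) \<in> E\<^sup>*"
    and arity: "\<forall>v\<in>V. card (children E v) = 0 \<or> card (children E v) = 2"
    and leaves: "card {v\<in>V. children E v = {}} = n"
    unfolding full_binary_tree_def by blast
  have F_sub: "F \<subseteq> h ` V \<times> h ` V" using sub unfolding F_def by auto
  have F_children: "children F (h v) = h ` children E v" if "v \<in> V" for v
    unfolding F_def using children_map_prod_image[OF inj sub that] .
  have children_sub: "children E v \<subseteq> V" for v using sub by (auto simp: children_def)
  have no_parent': "(u, h \<rho>) \<notin> F" for u
  proof
    assume "(u, h \<rho>) \<in> F"
    then obtain a b where "(a, b) \<in> E" "h b = h \<rho>" unfolding F_def by auto
    moreover from this have "b = \<rho>" using inj_onD[OF inj] sub \<rho> by blast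
    ultimately show False using no_parent by blast
  qed
  have parent': "\<exists>!u. (u, h v) \<in> F" if v: "v \<in> V" "h v \<noteq> h \<rho>" for v
  proof -
    have "v \<noteq> \<rho>" using v(2) by blast
    then have "\<exists>!u. (u, v) \<in> E" using parent v(1) by blast
    then show ?thesis unfolding F_def by (rule ex1_parent_map_prod_image[OF inj sub v(1)])
  qed
  have reach': "(h \<rho>, h v) \<in> F\<^sup>*" if "v \<in> V" for v
    unfolding F_def by (rule rtrancl_map_prod_image) (use reach that in blast)
  have arity': "card (children F (h v)) = card (children E v)" if "v \<in> V" for v
    using F_children[OF that] card_image[OF inj_on_subset[OF inj children_sub]] by simp
  have "{w \<in> h ` V. children F w = {}} = h ` {v \<in> V. children E v = {}}"
    using F_children by auto
  then have leaves': "card {w \<in> h ` V. children F w = {}} = n"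
    using leaves card_image[OF inj_on_subset[OF inj, of "{v \<in> V. children E v = {}}"]] by simp
  show ?thesis
    unfolding full_binary_tree_def F_def[symmetric]
  proof (intro conjI bexI[of _ "h \<rho>"])
    show "\<forall>w\<in>h ` V. w \<noteq> h \<rho> \<longrightarrow> (\<exists>!u. (u, w) \<in> F)" using parent' by blast
    show "\<forall>w\<in>h ` V. (h \<rho>, w) \<in> F\<^sup>*" using reach' by blast
    show "\<forall>w\<in>h ` V. card (children F w) = 0 \<or> card (children F w) = 2" using arity' arity by auto
  qed (use fin F_sub \<rho> no_parent' leaves' in auto)
qed

section \<open>Increasing trees\<close>

definition increasing_tree :: "nat set \<Rightarrow> (nat \<times> nat) set \<Rightarrow> nat \<Rightarrow> bool" where
  "increasing_tree L E n \<longleftrightarrow> full_binary_tree L E n \<and> (\<forall>(u, v)\<in>E. u < v)"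

lemma increasing_treeD:
  assumes "increasing_tree L E n"
  shows "finite L" and "E \<subseteq> L \<times> L" and "\<And>u v. (u, v) \<in> E \<Longrightarrow> u < v"
    and "Min L \<in> L" and "\<And>u. (u, Min L) \<notin> E"
    and "\<And>v. v \<in> L \<Longrightarrow> v \<noteq> Min L \<Longrightarrow> \<exists>!u. (u, v) \<in> E"
    and "\<And>v. v \<in> L \<Longrightarrow> (Min L, v) \<in> E\<^sup>*"
    and "\<And>v. v \<in> L \<Longrightarrow> card (children E v) = 0 \<or> card (children E v) = 2"
    and "card {v\<in>L. children E v = {}} = n"
proof -
  from assms obtain \<rho> where \<rho>: "\<rho> \<in> L" "\<forall>u. (u, \<rho>) \<notin> E"
    "\<forall>v\<in>L. v \<noteq> \<rho> \<longrightarrow> (\<exists>!u. (u, v) \<in> E)" "\<forall>v\<in>L. (\<rho>, v) \<in> E\<^sup>*"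
    and fin: "finite L" and inc: "\<forall>(u, v)\<in>E. u < v"
    unfolding increasing_tree_def full_binary_tree_def by blast
  have "Min L = \<rho>"
    using \<rho>(1,4) fin rtrancl_le_if_increasing[OF _ inc] by (intro Min_eqI) auto
  then show "Min L \<in> L" "\<And>u. (u, Min L) \<notin> E"
    "\<And>v. v \<in> L \<Longrightarrow> v \<noteq> Min L \<Longrightarrow> \<exists>!u. (u, v) \<in> E" "\<And>v. v \<in> L \<Longrightarrow> (Min L, v) \<in> E\<^sup>*"
    using \<rho> by auto
  show "finite L" "E \<subseteq> L \<times> L" "\<And>u v. (u, v) \<in> E \<Longrightarrow> u < v"
    "\<And>v. v \<in> L \<Longrightarrow> card (children E v) = 0 \<or> card (children E v) = 2"
    "card {v\<in>L. children E v = {}} = n"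
    using assms unfolding increasing_tree_def full_binary_tree_def by blast+
qed

lemma increasing_tree_parent_unique:
  assumes "increasing_tree L E n" "(y, z) \<in> E" "(y', z) \<in> E"
  shows "y = y'"
proof -
  have "z \<in> L" "z \<noteq> Min L"
    using increasing_treeD(2,5)[OF assms(1)] assms(2) by auto
  then show ?thesis using increasing_treeD(6)[OF assms(1)] assms(2,3) by blast
qed

lemma increasing_tree_singleton_iff: "increasing_tree {a} E n \<longleftrightarrow> E = {} \<and> n = 1"
proof
  assume T: "increasing_tree {a} E n"
  then have "E = {}" using increasing_treeD(2,3)[OF T] by auto
  then show "E = {} \<and> n = 1" using increasing_treeD(9)[OF T] by (simp add: children_def)
qed (auto simp: increasing_tree_def full_binary_tree_def children_def)

lemma increasing_tree_ancestors_comparable: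
  assumes T: "increasing_tree L E n" and "(a, v) \<in> E\<^sup>*" "(b, v) \<in> E\<^sup>*"
  shows "(a, b) \<in> E\<^sup>* \<or> (b, a) \<in> E\<^sup>*"
  using assms(2,3)
proof (induction arbitrary: b rule: rtrancl_induct)
  case (step y z)
  from step.prems show ?case
  proof (cases rule: rtranclE)
    case (step y')
    then have "y' = y" using increasing_tree_parent_unique[OF T] \<open>(y, z) \<in> E\<close> by blast
    then show ?thesis using step.IH step by auto
  qed (use step in auto)
qed auto

lemma increasing_tree_subtree:
  assumes T: "increasing_tree L E n" and c: "c \<in> L"
  defines "D \<equiv> E\<^sup>* `` {c}"
  shows "increasing_tree D (E \<inter> D \<times> D) (card {v\<in>D. children E v = {}})"
proof -
  note R = increasing_treeD[OF T]
  have closed: "E `` D \<subseteq> D" unfolding D_def by (auto intro: rtrancl_into_rtrancl)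
  have DL: "D \<subseteq> L" unfolding D_def using R(2) c by (rule rtrancl_Image_subset)
  have c_root: "(u, c) \<notin> E \<inter> D \<times> D" for u
  proof
    assume "(u, c) \<in> E \<inter> D \<times> D"
    then have "c \<le> u" "u < c"
      using rtrancl_le_if_increasing[of c u E] R(3) unfolding D_def by auto
    then show False by simp
  qed
  have parent: "\<exists>!u. (u, v) \<in> E \<inter> D \<times> D" if "v \<in> D" "v \<noteq> c" for v
  proof -
    have "(c, v) \<in> E\<^sup>+" using that unfolding D_def by (simp add: rtrancl_eq_or_trancl)
    then obtain w where "(c, w) \<in> E\<^sup>*" "(w, v) \<in> E" by (meson tranclD2)
    then have "(w, v) \<in> E \<inter> D \<times> D" using that unfolding D_def by auto
    then show ?thesis using increasing_tree_parent_unique[OF T] by blast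
  qed
  have "\<exists>\<rho>\<in>D. (\<forall>u. (u, \<rho>) \<notin> E \<inter> D \<times> D) \<and>
      (\<forall>v\<in>D. v \<noteq> \<rho> \<longrightarrow> (\<exists>!u. (u, v) \<in> E \<inter> D \<times> D)) \<and> (\<forall>v\<in>D. (\<rho>, v) \<in> (E \<inter> D \<times> D)\<^sup>*)"
  proof (intro bexI[of _ c] conjI allI ballI impI)
    show "\<And>u. (u, c) \<notin> E \<inter> D \<times> D" by (rule c_root)
    show "\<And>v. v \<in> D \<Longrightarrow> v \<noteq> c \<Longrightarrow> \<exists>!u. (u, v) \<in> E \<inter> D \<times> D" by (rule parent)
    show "\<And>v. v \<in> D \<Longrightarrow> (c, v) \<in> (E \<inter> D \<times> D)\<^sup>*"
      unfolding D_def by (rule rtrancl_into_rtrancl_Restr_descendants) simp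
  qed (simp add: D_def)
  moreover have "finite D" using DL R(1) by (rule finite_subset)
  moreover have "\<forall>v\<in>D. card (children (E \<inter> D \<times> D) v) = 0 \<or> card (children (E \<inter> D \<times> D) v) = 2"
    using children_restrict_closed[OF closed] R(8) DL by auto
  moreover have "{v\<in>D. children (E \<inter> D \<times> D) v = {}} = {v\<in>D. children E v = {}}"
    using children_restrict_closed[OF closed] by auto
  ultimately show ?thesis
    unfolding increasing_tree_def full_binary_tree_def using R(3) by auto
qed

lemma increasing_tree_root_children:
  assumes T: "increasing_tree L E n" and L: "L \<noteq> {Min L}"
  obtains c1 c2 where "c1 \<noteq> c2" "children E (Min L) = {c1, c2}"
proof -
  note R = increasing_treeD[OF T]
  obtain v where "v \<in> L" "v \<noteq> Min L" using L R(4) by blast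
  then have "(Min L, v) \<in> E\<^sup>+" using R(7) by (auto simp: rtrancl_eq_or_trancl)
  then obtain w where "(Min L, w) \<in> E" by (meson tranclD)
  then have "children E (Min L) \<noteq> {}" by (auto simp: children_def)
  moreover have "finite (children E (Min L))"
    using R(1,2) by (auto simp: children_def intro: finite_subset[of _ L])
  ultimately have "card (children E (Min L)) = 2" using R(8)[OF R(4)] by force
  then show ?thesis using that by (meson card_2_iff)
qed

lemma increasing_tree_sibling_subtrees_disjoint:
  assumes T: "increasing_tree L E n" and "(p, c1) \<in> E" "(p, c2) \<in> E" "c1 \<noteq> c2"
  shows "E\<^sup>* `` {c1} \<inter> E\<^sup>* `` {c2} = {}"
proof -
  have not_below: "(a, b) \<notin> E\<^sup>*" if "(p, a) \<in> E" "(p, b) \<in> E" "a \<noteq> b" for a b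
  proof
    assume "(a, b) \<in> E\<^sup>*"
    then have "(a, b) \<in> E\<^sup>+" using that(3) by (simp add: rtrancl_eq_or_trancl)
    then obtain w where "(a, w) \<in> E\<^sup>*" "(w, b) \<in> E" by (meson tranclD2)
    moreover have "w = p" using increasing_tree_parent_unique[OF T] that(2) calculation(2) by blast
    ultimately have "a \<le> p" using rtrancl_le_if_increasing increasing_treeD(3)[OF T] by blast
    then show False using increasing_treeD(3)[OF T, OF that(1)] by simp
  qed
  show ?thesis
    using increasing_tree_ancestors_comparable[OF T] not_below assms(2-4) by blast
qed

lemma increasing_tree_nodes:
  assumes T: "increasing_tree L E n"
  shows "L = insert (Min L) (\<Union>c\<in>children E (Min L). E\<^sup>* `` {c})"
proof
  note R = increasing_treeD[OF T]
  show "insert (Min L) (\<Union>c\<in>children E (Min L). E\<^sup>* `` {c}) \<subseteq> L"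
    using R(2,4) rtrancl_Image_subset[OF R(2)] by (auto simp: children_def)
  show "L \<subseteq> insert (Min L) (\<Union>c\<in>children E (Min L). E\<^sup>* `` {c})"
  proof
    fix x assume "x \<in> L"
    show "x \<in> insert (Min L) (\<Union>c\<in>children E (Min L). E\<^sup>* `` {c})"
    proof (cases "x = Min L")
      case False
      then have "(Min L, x) \<in> E\<^sup>+" using R(7) \<open>x \<in> L\<close> by (auto simp: rtrancl_eq_or_trancl)
      then obtain w where "(Min L, w) \<in> E" "(w, x) \<in> E\<^sup>*" by (meson tranclD)
      then show ?thesis by (auto simp: children_def)
    qed simp
  qed
qed

definition join_edges ::
  "nat \<Rightarrow> nat set \<Rightarrow> (nat \<times> nat) set \<Rightarrow> nat set \<Rightarrow> (nat \<times> nat) set \<Rightarrow> (nat \<times> nat) set" where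
  "join_edges r A E1 B E2 = E1 \<union> E2 \<union> {(r, Min A), (r, Min B)}"

lemma increasing_tree_split:
  assumes T: "increasing_tree L E n" and L: "L \<noteq> {Min L}"
  obtains A B E1 E2 n1 n2 where "L = insert (Min L) (A \<union> B)" "A \<inter> B = {}" "Min L \<notin> A \<union> B"
    "increasing_tree A E1 n1" "increasing_tree B E2 n2" "n = n1 + n2"
    "E = join_edges (Min L) A E1 B E2"
proof -
  define r where "r = Min L"
  note R = increasing_treeD[OF T, folded r_def]
  obtain c1 c2 where c: "c1 \<noteq> c2" "children E r = {c1, c2}"
    using increasing_tree_root_children[OF T L] unfolding r_def by blast
  then have e: "(r, c1) \<in> E" "(r, c2) \<in> E" by (auto simp: children_def)
  then have "c1 \<in> L" "c2 \<in> L" using R(2) by auto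
  have le: "a \<le> b" if "(a, b) \<in> E\<^sup>*" for a b
    using rtrancl_le_if_increasing[OF that] R(3) by blast
  define A where "A = E\<^sup>* `` {c1}"
  define B where "B = E\<^sup>* `` {c2}"
  have L_eq: "L = insert r (A \<union> B)"
    using increasing_tree_nodes[OF T] c(2) unfolding r_def A_def B_def by auto
  have AB: "A \<inter> B = {}"
    unfolding A_def B_def by (rule increasing_tree_sibling_subtrees_disjoint[OF T e c(1)])
  have above: "r < x" if "x \<in> A \<union> B" for x
    using that e R(3) le unfolding A_def B_def by (blast intro: less_le_trans)
  have Min: "Min A = c1" "Min B = c2"
    using R(1) L_eq le unfolding A_def B_def by (auto intro!: Min_eqI intro: finite_subset)
  have closed: "E `` A \<subseteq> A" "E `` B \<subseteq> B"
    unfolding A_def B_def by (auto intro: rtrancl_into_rtrancl)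
  have fin: "finite A" "finite B" using L_eq R(1) by auto
  define E1 where "E1 = E \<inter> A \<times> A"
  define E2 where "E2 = E \<inter> B \<times> B"
  define n1 where "n1 = card {v\<in>A. children E v = {}}"
  define n2 where "n2 = card {v\<in>B. children E v = {}}"
  have "increasing_tree A E1 n1" "increasing_tree B E2 n2"
    using increasing_tree_subtree[OF T \<open>c1 \<in> L\<close>] increasing_tree_subtree[OF T \<open>c2 \<in> L\<close>]
    unfolding A_def B_def E1_def E2_def n1_def n2_def by simp_all
  moreover have "n = n1 + n2"
    using card_leaves_insert_Un[OF fin AB, of E r] c(2) R(9) L_eq unfolding n1_def n2_def by simp
  moreover have "E = join_edges r A E1 B E2"
    using edges_decompose_at_root[OF R(2) L_eq closed c(2)] Min
    unfolding join_edges_def E1_def E2_def by simp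
  ultimately show ?thesis
    using that L_eq AB above unfolding r_def by blast
qed

lemma join_edges_children:
  assumes "E1 \<subseteq> A \<times> A" "E2 \<subseteq> B \<times> B" "A \<inter> B = {}" "r \<notin> A \<union> B"
  shows "v \<in> A \<Longrightarrow> children (join_edges r A E1 B E2) v = children E1 v"
    and "v \<in> B \<Longrightarrow> children (join_edges r A E1 B E2) v = children E2 v"
    and "children (join_edges r A E1 B E2) r = {Min A, Min B}"
  using assms unfolding join_edges_def children_def by auto

lemma join_edges_parent:
  assumes T1: "increasing_tree A E1 n1" and T2: "increasing_tree B E2 n2"
    and AB: "A \<inter> B = {}" and r: "r \<notin> A \<union> B"
  shows "(u, r) \<notin> join_edges r A E1 B E2"
    and "v \<in> A \<union> B \<Longrightarrow> \<exists>!u. (u, v) \<in> join_edges r A E1 B E2"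
proof -
  let ?E = "join_edges r A E1 B E2"
  note R1 = increasing_treeD[OF T1] and R2 = increasing_treeD[OF T2]
  show "(u, r) \<notin> ?E" using r R1(2,4) R2(2,4) unfolding join_edges_def by auto
  have parent_A: "(u, z) \<in> ?E \<longleftrightarrow> (u, z) \<in> E1 \<or> (u = r \<and> z = Min A)" if "z \<in> A" for u z
    using that R2(2,4) AB unfolding join_edges_def by auto
  have parent_B: "(u, z) \<in> ?E \<longleftrightarrow> (u, z) \<in> E2 \<or> (u = r \<and> z = Min B)" if "z \<in> B" for u z
    using that R1(2,4) AB unfolding join_edges_def by auto
  assume "v \<in> A \<union> B"
  then consider "v \<in> A" | "v \<in> B" by blast
  then show "\<exists>!u. (u, v) \<in> ?E"
  proof cases
    case 1
    then show ?thesis using parent_A[OF 1] R1(5) R1(6)[OF 1] by (cases "v = Min A") auto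
  next
    case 2
    then show ?thesis using parent_B[OF 2] R2(5) R2(6)[OF 2] by (cases "v = Min B") auto
  qed
qed

lemma join_edges_reach:
  assumes T1: "increasing_tree A E1 n1" and T2: "increasing_tree B E2 n2"
    and v: "v \<in> insert r (A \<union> B)"
  shows "(r, v) \<in> (join_edges r A E1 B E2)\<^sup>*"
proof -
  let ?E = "join_edges r A E1 B E2"
  have sub: "E1\<^sup>* \<subseteq> ?E\<^sup>*" "E2\<^sup>* \<subseteq> ?E\<^sup>*"
    unfolding join_edges_def by (intro rtrancl_mono; auto)+
  have root_edges: "(r, Min A) \<in> ?E" "(r, Min B) \<in> ?E" unfolding join_edges_def by auto
  consider "v = r" | "v \<in> A" | "v \<in> B" using v by auto
  then show ?thesis
  proof cases
    case 2
    then show ?thesis using sub(1) increasing_treeD(7)[OF T1] root_edges(1)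
      by (blast intro: converse_rtrancl_into_rtrancl)
  next
    case 3
    then show ?thesis using sub(2) increasing_treeD(7)[OF T2] root_edges(2)
      by (blast intro: converse_rtrancl_into_rtrancl)
  qed simp
qed

lemma increasing_tree_join:
  assumes T1: "increasing_tree A E1 n1" and T2: "increasing_tree B E2 n2"
    and AB: "A \<inter> B = {}" and above: "\<forall>a\<in>A \<union> B. r < a"
  shows "increasing_tree (insert r (A \<union> B)) (join_edges r A E1 B E2) (n1 + n2)"
proof -
  define L where "L = insert r (A \<union> B)"
  define E where "E = join_edges r A E1 B E2"
  note R1 = increasing_treeD[OF T1] and R2 = increasing_treeD[OF T2]
  have r: "r \<notin> A \<union> B" using above by auto
  note ch = join_edges_children[OF R1(2) R2(2) AB r, folded E_def]
  have "\<exists>\<rho>\<in>L. (\<forall>u. (u, \<rho>) \<notin> E) \<and> (\<forall>v\<in>L. v \<noteq> \<rho> \<longrightarrow> (\<exists>!u. (u, v) \<in> E)) \<and>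
      (\<forall>v\<in>L. (\<rho>, v) \<in> E\<^sup>*)"
    using join_edges_parent[OF T1 T2 AB r] join_edges_reach[OF T1 T2]
    unfolding L_def E_def by (intro bexI[of _ r]) auto
  moreover have "card (children E v) = 0 \<or> card (children E v) = 2" if v: "v \<in> L" for v
  proof -
    have "Min A \<noteq> Min B" using R1(4) R2(4) AB by auto
    consider "v = r" | "v \<in> A" | "v \<in> B" using v unfolding L_def by auto
    then show ?thesis using ch R1(8) R2(8) \<open>Min A \<noteq> Min B\<close> by cases auto
  qed
  moreover have "card {v\<in>L. children E v = {}} = n1 + n2"
  proof -
    have "{v\<in>A. children E v = {}} = {v\<in>A. children E1 v = {}}"
      "{v\<in>B. children E v = {}} = {v\<in>B. children E2 v = {}}" using ch by auto
    then show ?thesis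
      using card_leaves_insert_Un[OF R1(1) R2(1) AB, of E r] ch(3) R1(9) R2(9) unfolding L_def by simp
  qed
  moreover have "finite L" "E \<subseteq> L \<times> L" "\<forall>(u, v)\<in>E. u < v"
    using R1(1-4) R2(1-4) above unfolding L_def E_def join_edges_def by auto
  ultimately show ?thesis
    unfolding increasing_tree_def full_binary_tree_def L_def E_def by auto
qed

lemma join_edges_commute: "join_edges r A E1 B E2 = join_edges r B E2 A E1"
  unfolding join_edges_def by auto

lemma join_edges_restrict:
  assumes "increasing_tree A E1 n1" "increasing_tree B E2 n2" "A \<inter> B = {}" "r \<notin> A \<union> B"
  shows "join_edges r A E1 B E2 \<inter> A \<times> A = E1" and "join_edges r A E1 B E2 \<inter> B \<times> B = E2"
  using increasing_treeD(2)[OF assms(1)] increasing_treeD(2)[OF assms(2)] assms(3,4)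
  unfolding join_edges_def by auto

lemma join_edges_subtree:
  assumes T1: "increasing_tree A E1 n1" and T2: "increasing_tree B E2 n2"
    and "A \<inter> B = {}" "r \<notin> A"
  shows "(join_edges r A E1 B E2)\<^sup>* `` {Min A} = A"
proof -
  define E where "E = join_edges r A E1 B E2"
  note R1 = increasing_treeD[OF T1] and R2 = increasing_treeD[OF T2]
  have "E\<^sup>* `` {Min A} \<subseteq> E\<^sup>* `` A" using R1(4) by blast
  also have "\<dots> = A"
    using R1(2) R2(2) assms(3,4) unfolding E_def join_edges_def by (intro Image_closed_trancl) auto
  finally have "E\<^sup>* `` {Min A} \<subseteq> A" .
  moreover have "E1\<^sup>* \<subseteq> E\<^sup>*" unfolding E_def join_edges_def by (intro rtrancl_mono) auto
  ultimately show ?thesis using R1(7) unfolding E_def[symmetric] by blast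
qed

lemma increasing_tree_card: "increasing_tree L E n \<Longrightarrow> card L + 1 = 2 * n"
proof (induction "card L" arbitrary: L E n rule: less_induct)
  case less
  show ?case
  proof (cases "L = {Min L}")
    case True
    then obtain a where L: "L = {a}" by blast
    then have "increasing_tree {a} E n" using less.prems by simp
    then have "n = 1" by (simp add: increasing_tree_singleton_iff)
    then show ?thesis using L by simp
  next
    case False
    obtain A B E1 E2 n1 n2 where split: "L = insert (Min L) (A \<union> B)" "A \<inter> B = {}"
      "Min L \<notin> A \<union> B" "increasing_tree A E1 n1" "increasing_tree B E2 n2" "n = n1 + n2"
      using increasing_tree_split[OF less.prems False] by metis
    have "finite A" "finite B" using increasing_treeD(1) split(4,5) by blast+
    have "card L = card (insert (Min L) (A \<union> B))" using split(1) by (rule arg_cong)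
    also have "\<dots> = Suc (card A + card B)"
      using split(2,3) \<open>finite A\<close> \<open>finite B\<close> by (simp add: card_Un_disjoint)
    finally have card_L: "card L = Suc (card A + card B)" .
    then have "card A + 1 = 2 * n1" "card B + 1 = 2 * n2"
      using less.hyps[OF _ split(4)] less.hyps[OF _ split(5)] by auto
    then show ?thesis using card_L split(6) by simp
  qed
qed

lemma increasing_tree_image:
  assumes h: "strict_mono_on L h" and T: "increasing_tree L E n"
  shows "increasing_tree (h ` L) (map_prod h h ` E) n"
proof -
  have "full_binary_tree (h ` L) (map_prod h h ` E) n"
    using T strict_mono_on_imp_inj_on[OF h] full_binary_tree_image
    unfolding increasing_tree_def by blast
  moreover have "h u < h v" if "(u, v) \<in> E" for u v
    using that increasing_treeD(2,3)[OF T] strict_mono_on_less[OF h] by blast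
  ultimately show ?thesis unfolding increasing_tree_def by auto
qed

section \<open>Counting increasing trees\<close>

definition increasing_trees :: "nat set \<Rightarrow> (nat \<times> nat) set set" where
  "increasing_trees L = {E. \<exists>n. increasing_tree L E n}"

lemma finite_increasing_trees: "finite L \<Longrightarrow> finite (increasing_trees L)"
proof -
  assume "finite L"
  moreover have "increasing_trees L \<subseteq> Pow (L \<times> L)"
    unfolding increasing_trees_def using increasing_treeD(2) by blast
  ultimately show ?thesis by (meson finite_Pow_iff finite_SigmaI finite_subset)
qed

lemma increasing_trees_singleton: "increasing_trees {a} = {{}}"
  unfolding increasing_trees_def using increasing_tree_singleton_iff by auto

lemma increasing_trees_even_card:
  assumes "even (card L)"
  shows "increasing_trees L = {}"
proof -
  have "\<not> increasing_tree L E n" for E n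
  proof
    assume "increasing_tree L E n"
    then have "card L + 1 = 2 * n" by (rule increasing_tree_card)
    with assms show False by presburger
  qed
  then show ?thesis unfolding increasing_trees_def by blast
qed

lemma join_edges_mem_increasing_trees:
  assumes A: "A \<subseteq> M" and E: "E1 \<in> increasing_trees A" "E2 \<in> increasing_trees (M - A)"
    and above: "\<forall>a\<in>M. r < a"
  shows "join_edges r A E1 (M - A) E2 \<in> increasing_trees (insert r M)"
proof -
  obtain n1 n2 where T: "increasing_tree A E1 n1" "increasing_tree (M - A) E2 n2"
    using E unfolding increasing_trees_def by blast
  have "A \<inter> (M - A) = {}" "\<forall>a\<in>A \<union> (M - A). r < a" using A above by auto
  then have "increasing_tree (insert r (A \<union> (M - A))) (join_edges r A E1 (M - A) E2) (n1 + n2)"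
    using increasing_tree_join[OF T] by blast
  moreover have "insert r (A \<union> (M - A)) = insert r M" using A by auto
  ultimately show ?thesis unfolding increasing_trees_def by auto
qed

lemma increasing_trees_insert_split:
  assumes M: "finite M" "M \<noteq> {}" and above: "\<forall>a\<in>M. r < a"
    and E: "E \<in> increasing_trees (insert r M)"
  obtains A E1 E2 where "A \<subseteq> M" "Min M \<in> A" "E1 \<in> increasing_trees A" "E2 \<in> increasing_trees (M - A)"
    "E = join_edges r A E1 (M - A) E2"
proof -
  obtain n where T: "increasing_tree (insert r M) E n" using E unfolding increasing_trees_def by blast
  have Min_L: "Min (insert r M) = r" using M above by (auto intro: Min_eqI less_imp_le)
  have L_ne: "insert r M \<noteq> {Min (insert r M)}" using M(2) above Min_L by auto
  obtain A B E1 E2 n1 n2 where split: "insert r M = insert r (A \<union> B)" "A \<inter> B = {}"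
    "r \<notin> A \<union> B" "increasing_tree A E1 n1" "increasing_tree B E2 n2" "n = n1 + n2"
    "E = join_edges r A E1 B E2"
    by (rule increasing_tree_split[OF T L_ne, unfolded Min_L])
  have "r \<notin> M" using above by auto
  then have M_eq: "M = A \<union> B" using split(1,3) by (simp add: insert_ident)
  then have sub: "A \<subseteq> M" "B \<subseteq> M" and B: "B = M - A" and A: "A = M - B" using split(2) by auto
  have trees: "E1 \<in> increasing_trees A" "E2 \<in> increasing_trees B"
    using split(4,5) unfolding increasing_trees_def by auto
  have "Min M \<in> A \<or> Min M \<in> B" using Min_in[OF M] M_eq by blast
  then show thesis
  proof
    assume "Min M \<in> A"
    then show thesis using sub(1) trees(1) trees(2)[unfolded B] split(7)[unfolded B] that by blast
  next
    assume "Min M \<in> B"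
    have "E = join_edges r B E2 A E1" by (subst join_edges_commute) (rule split(7))
    then show thesis
      using \<open>Min M \<in> B\<close> sub(2) trees(2) trees(1)[unfolded A] that unfolding A by blast
  qed
qed

(* Listing first the subtree that contains the least non-root label makes the
   decomposition unique. *)
lemma increasing_trees_insert:
  assumes M: "finite M" "M \<noteq> {}" and above: "\<forall>a\<in>M. r < a"
  shows "increasing_trees (insert r M) = (\<lambda>(A, E1, E2). join_edges r A E1 (M - A) E2) `
    (SIGMA A:{A. A \<subseteq> M \<and> Min M \<in> A}. increasing_trees A \<times> increasing_trees (M - A))"
proof (intro equalityI subsetI)
  fix E assume "E \<in> increasing_trees (insert r M)"
  then obtain A E1 E2 where "A \<subseteq> M" "Min M \<in> A" "E1 \<in> increasing_trees A"
    "E2 \<in> increasing_trees (M - A)" "E = join_edges r A E1 (M - A) E2"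
    using increasing_trees_insert_split[OF assms] by blast
  then show "E \<in> (\<lambda>(A, E1, E2). join_edges r A E1 (M - A) E2) `
      (SIGMA A:{A. A \<subseteq> M \<and> Min M \<in> A}. increasing_trees A \<times> increasing_trees (M - A))"
    by force
qed (use join_edges_mem_increasing_trees above in fastforce)

lemma inj_on_join_edges:
  assumes M: "finite M" and r: "r \<notin> M"
  shows "inj_on (\<lambda>(A, E1, E2). join_edges r A E1 (M - A) E2)
    (SIGMA A:{A. A \<subseteq> M \<and> Min M \<in> A}. increasing_trees A \<times> increasing_trees (M - A))"
proof (rule inj_on_inverseI)
  fix x assume x: "x \<in> (SIGMA A:{A. A \<subseteq> M \<and> Min M \<in> A}. increasing_trees A \<times> increasing_trees (M - A))"
  then obtain A E1 E2 n1 n2 where x_eq: "x = (A, E1, E2)" and A: "A \<subseteq> M" "Min M \<in> A"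
    and T: "increasing_tree A E1 n1" "increasing_tree (M - A) E2 n2"
    unfolding increasing_trees_def by auto
  have disj: "A \<inter> (M - A) = {}" and r': "r \<notin> A \<union> (M - A)" using A r by auto
  have "Min A = Min M" using A M by (intro Min_eqI) (auto intro: finite_subset)
  then have "(join_edges r A E1 (M - A) E2)\<^sup>* `` {Min M} = A"
    using join_edges_subtree[OF T disj] r' by auto
  moreover note join_edges_restrict[OF T disj r']
  ultimately show "(\<lambda>J. let A = J\<^sup>* `` {Min M} in (A, J \<inter> A \<times> A, J \<inter> (M - A) \<times> (M - A)))
      ((\<lambda>(A, E1, E2). join_edges r A E1 (M - A) E2) x) = x"
    unfolding x_eq by simp
qed

lemma card_increasing_trees_insert:
  assumes M: "finite M" "M \<noteq> {}" and above: "\<forall>a\<in>M. r < a"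
  shows "card (increasing_trees (insert r M)) =
    (\<Sum>A | A \<subseteq> M \<and> Min M \<in> A. card (increasing_trees A) * card (increasing_trees (M - A)))"
proof -
  let ?P = "{A. A \<subseteq> M \<and> Min M \<in> A}"
  have fin: "finite ?P" using M(1) by (auto intro: rev_finite_subset[of "Pow M"])
  have "r \<notin> M" using above by auto
  then have "card (increasing_trees (insert r M)) =
      card (SIGMA A:?P. increasing_trees A \<times> increasing_trees (M - A))"
    unfolding increasing_trees_insert[OF assms] using M(1) by (intro card_image inj_on_join_edges)
  also have "\<dots> = (\<Sum>A\<in>?P. card (increasing_trees A \<times> increasing_trees (M - A)))"
    using fin M(1) by (intro card_SigmaI) (auto intro!: finite_cartesian_product finite_increasing_trees
      intro: finite_subset)
  finally show ?thesis by (simp add: card_cartesian_product)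
qed

lemma strict_mono_on_inv_into:
  fixes h :: "'a::linorder \<Rightarrow> 'b::linorder"
  assumes h: "strict_mono_on L h"
  shows "strict_mono_on (h ` L) (inv_into L h)"
proof (rule strict_mono_onI)
  fix x y assume "x \<in> h ` L" "y \<in> h ` L" "x < y"
  then obtain a b where "a \<in> L" "b \<in> L" "x = h a" "y = h b" "h a < h b" by auto
  then show "inv_into L h x < inv_into L h y"
    using strict_mono_on_less[OF h] inv_into_f_f[OF strict_mono_on_imp_inj_on[OF h]] by simp
qed

lemma increasing_trees_image:
  assumes h: "strict_mono_on L h"
  shows "increasing_trees (h ` L) = image (map_prod h h) ` increasing_trees L"
proof (intro equalityI subsetI)
  fix F assume "F \<in> increasing_trees (h ` L)"
  then obtain n where T: "increasing_tree (h ` L) F n" unfolding increasing_trees_def by blast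
  define g where "g = inv_into L h"
  have inj: "inj_on h L" using h by (rule strict_mono_on_imp_inj_on)
  have "increasing_tree (g ` h ` L) (map_prod g g ` F) n"
    unfolding g_def by (rule increasing_tree_image[OF strict_mono_on_inv_into[OF h] T])
  then have "map_prod g g ` F \<in> increasing_trees L"
    unfolding g_def inv_into_image_cancel[OF inj subset_refl] increasing_trees_def by blast
  moreover have "map_prod h h (map_prod g g p) = p" if "p \<in> F" for p
    using that increasing_treeD(2)[OF T] unfolding g_def by (auto simp: f_inv_into_f)
  then have "F = map_prod h h ` map_prod g g ` F" unfolding image_image by simp
  ultimately show "F \<in> image (map_prod h h) ` increasing_trees L" by blast
qed (use increasing_tree_image[OF h] in \<open>auto simp: increasing_trees_def\<close>)

lemma card_increasing_trees_image:
  assumes h: "strict_mono_on L h"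
  shows "card (increasing_trees (h ` L)) = card (increasing_trees L)"
  unfolding increasing_trees_image[OF h]
proof (rule card_image, rule inj_on_subset)
  show "inj_on (image (map_prod h h)) (Pow (L \<times> L))"
    using strict_mono_on_imp_inj_on[OF h] by (intro inj_on_image_Pow map_prod_inj_on)
  show "increasing_trees L \<subseteq> Pow (L \<times> L)"
    unfolding increasing_trees_def using increasing_treeD(2) by blast
qed

lemma card_increasing_trees_eq_lessThan:
  assumes "finite L"
  shows "card (increasing_trees L) = card (increasing_trees {..<card L})"
proof -
  obtain h where "bij_betw h {..<card L} L" "strict_mono_on {..<card L} h"
    using ex_bij_betw_strict_mono_card[OF assms] by blast
  then show ?thesis using card_increasing_trees_image by (metis bij_betw_imp_surj_on)
qed

lemma sum_Pow_complement_symmetric: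
  fixes f :: "'a set \<Rightarrow> 'b::comm_semiring_1"
  assumes "finite M" "s \<in> M" and sym: "\<And>A. A \<subseteq> M \<Longrightarrow> f (M - A) = f A"
  shows "(\<Sum>A\<in>Pow M. f A) = 2 * (\<Sum>A | A \<subseteq> M \<and> s \<in> A. f A)"
proof -
  let ?P1 = "{A. A \<subseteq> M \<and> s \<in> A}" and ?P2 = "{A. A \<subseteq> M \<and> s \<notin> A}"
  have fin: "finite ?P1" "finite ?P2" using assms(1) by (auto intro: rev_finite_subset[of "Pow M"])
  have "bij_betw (\<lambda>A. M - A) ?P1 ?P2"
    by (rule bij_betw_byWitness[where f' = "\<lambda>A. M - A"]) (use assms(2) in auto)
  then have "(\<Sum>A\<in>?P2. f A) = (\<Sum>A\<in>?P1. f (M - A))" by (simp add: sum.reindex_bij_betw)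
  also have "\<dots> = (\<Sum>A\<in>?P1. f A)" using sym by (intro sum.cong) auto
  finally have "(\<Sum>A\<in>?P2. f A) = (\<Sum>A\<in>?P1. f A)" .
  moreover have "Pow M = ?P1 \<union> ?P2" by auto
  ultimately show ?thesis using fin by (simp add: sum.union_disjoint disjoint_iff mult_2)
qed

lemma sum_Pow_card:
  assumes "finite S"
  shows "(\<Sum>A\<in>Pow S. g (card A)) = (\<Sum>j\<le>card S. (card S choose j) * g j)"
proof -
  have "(\<Sum>A\<in>Pow S. g (card A)) = (\<Sum>j\<le>card S. \<Sum>A | A \<in> Pow S \<and> card A = j. g (card A))"
    using assms by (intro sum.group[symmetric]) (auto simp: card_mono)
  also have "\<dots> = (\<Sum>j\<le>card S. (card S choose j) * g j)"
  proof (rule sum.cong[OF refl])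
    fix j
    have "{A. A \<in> Pow S \<and> card A = j} = {A. A \<subseteq> S \<and> card A = j}" by auto
    then show "(\<Sum>A | A \<in> Pow S \<and> card A = j. g (card A)) = (card S choose j) * g j"
      using n_subsets[OF assms] by simp
  qed
  finally show ?thesis .
qed

definition increasing_tree_count :: "nat \<Rightarrow> nat" where
  "increasing_tree_count k = card (increasing_trees {..<k})"

lemma increasing_tree_count_one: "increasing_tree_count 1 = 1"
  by (simp add: increasing_tree_count_def lessThan_Suc increasing_trees_singleton)

lemma increasing_tree_count_even: "even k \<Longrightarrow> increasing_tree_count k = 0"
  by (simp add: increasing_tree_count_def increasing_trees_even_card)

lemma increasing_tree_count_Suc:
  assumes "1 \<le> m"
  shows "2 * increasing_tree_count (Suc m) =
    (\<Sum>j\<le>m. (m choose j) * (increasing_tree_count j * increasing_tree_count (m - j)))"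
proof -
  define M where "M = {1..m}"
  have M: "finite M" "M \<noteq> {}" "\<forall>a\<in>M. 0 < a" "card M = m" using assms unfolding M_def by auto
  define f where "f A = card (increasing_trees A) * card (increasing_trees (M - A))" for A
  have "{..<Suc m} = insert 0 M" unfolding M_def by auto
  then have "2 * increasing_tree_count (Suc m) = 2 * (\<Sum>A | A \<subseteq> M \<and> Min M \<in> A. f A)"
    unfolding increasing_tree_count_def f_def using card_increasing_trees_insert[OF M(1-3)] by simp
  also have "\<dots> = (\<Sum>A\<in>Pow M. f A)"
    by (rule sum_Pow_complement_symmetric[OF M(1) Min_in[OF M(1,2)], symmetric])
      (simp add: f_def Diff_Diff_Int Int_absorb1 mult.commute)
  also have "\<dots> = (\<Sum>A\<in>Pow M. increasing_tree_count (card A) * increasing_tree_count (m - card A))"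
    unfolding f_def
  proof (rule sum.cong[OF refl])
    fix A assume "A \<in> Pow M"
    then have "finite A" "finite (M - A)" "card (M - A) = m - card A"
      using M by (auto simp: card_Diff_subset finite_subset)
    then show "card (increasing_trees A) * card (increasing_trees (M - A)) =
        increasing_tree_count (card A) * increasing_tree_count (m - card A)"
      unfolding increasing_tree_count_def by (metis card_increasing_trees_eq_lessThan)
  qed
  also have "\<dots> = (\<Sum>j\<le>m. (m choose j) * (increasing_tree_count j * increasing_tree_count (m - j)))"
    using sum_Pow_card[OF M(1)] M(4) by simp
  finally show ?thesis .
qed

section \<open>Ranked tree shapes\<close>

definition canonical :: "rtree \<Rightarrow> rtree" where
  "canonical T = (case T of (V, E, rk) \<Rightarrow> ({0..<card V}, map_prod rk rk ` E, id))"

lemma fhrts_imp_increasing_tree: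
  assumes "fhrts n (V, E, rk)"
  shows "increasing_tree {0..<card V} (map_prod rk rk ` E) n"
proof -
  have T: "full_binary_tree V E n" and rk: "bij_betw rk V {0..<card V}"
    and inc: "\<forall>(u, v)\<in>E. rk u < rk v"
    using assms unfolding fhrts_iff by auto
  have "full_binary_tree (rk ` V) (map_prod rk rk ` E) n"
    using full_binary_tree_image[OF bij_betw_imp_inj_on[OF rk] T] .
  then show ?thesis
    using inc bij_betw_imp_surj_on[OF rk] unfolding increasing_tree_def by auto
qed

lemma fhrts_id_iff: "fhrts n ({0..<m}, E, id) \<longleftrightarrow> increasing_tree {0..<m} E n"
  unfolding fhrts_iff increasing_tree_def by (simp add: bij_betw_id)

lemma card_rank_less:
  assumes rk: "bij_betw rk V {0..<card V}" and u: "u \<in> V"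
  shows "card {w\<in>V. rk w < rk u} = rk u"
proof -
  have "rk u < card V" using bij_betwE[OF rk] u by auto
  then have "rk ` {w\<in>V. rk w < rk u} = {0..<rk u}"
    using bij_betw_imp_surj_on[OF rk] by fastforce
  moreover have "inj_on rk {w\<in>V. rk w < rk u}"
    using bij_betw_imp_inj_on[OF rk] by (rule inj_on_subset) auto
  ultimately show ?thesis using card_image by fastforce
qed

lemma order_iso_preserves_rank:
  assumes rk1: "bij_betw rk1 V1 {0..<card V1}" and rk2: "bij_betw rk2 V2 {0..<card V2}"
    and f: "bij_betw f V1 V2" and mono: "\<forall>u\<in>V1. \<forall>v\<in>V1. rk1 u < rk1 v \<longleftrightarrow> rk2 (f u) < rk2 (f v)"
    and u: "u \<in> V1"
  shows "rk2 (f u) = rk1 u"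
proof -
  have "f ` {w\<in>V1. rk1 w < rk1 u} = {w\<in>V2. rk2 w < rk2 (f u)}"
    using mono u bij_betw_imp_surj_on[OF f] by auto
  moreover have "inj_on f {w\<in>V1. rk1 w < rk1 u}"
    using bij_betw_imp_inj_on[OF f] by (rule inj_on_subset) auto
  ultimately have "card {w\<in>V2. rk2 w < rk2 (f u)} = card {w\<in>V1. rk1 w < rk1 u}"
    using card_image by fastforce
  moreover have "f u \<in> V2" using bij_betwE[OF f] u by blast
  ultimately show ?thesis using card_rank_less[OF rk1 u] card_rank_less[OF rk2] by simp
qed

lemma rt_iso_imp_canonical_eq:
  assumes rk1: "bij_betw rk1 V1 {0..<card V1}" and rk2: "bij_betw rk2 V2 {0..<card V2}"
    and E1: "E1 \<subseteq> V1 \<times> V1" and E2: "E2 \<subseteq> V2 \<times> V2"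
    and iso: "rt_iso (V1, E1, rk1) (V2, E2, rk2)"
  shows "canonical (V1, E1, rk1) = canonical (V2, E2, rk2)"
proof -
  from iso obtain f where f: "bij_betw f V1 V2"
    and edges: "\<forall>u\<in>V1. \<forall>v\<in>V1. (u, v) \<in> E1 \<longleftrightarrow> (f u, f v) \<in> E2"
    and mono: "\<forall>u\<in>V1. \<forall>v\<in>V1. rk1 u < rk1 v \<longleftrightarrow> rk2 (f u) < rk2 (f v)"
    unfolding rt_iso_def by auto
  have rank: "rk2 (f u) = rk1 u" if "u \<in> V1" for u
    using order_iso_preserves_rank[OF rk1 rk2 f mono that] .
  have fV: "f ` V1 = V2" using f by (simp add: bij_betw_def)
  have "map_prod rk1 rk1 ` E1 = map_prod rk2 rk2 ` E2"
  proof (intro equalityI subsetI)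
    fix e assume "e \<in> map_prod rk1 rk1 ` E1"
    then obtain u v where uv: "(u, v) \<in> E1" "e = (rk1 u, rk1 v)" by auto
    then have "u \<in> V1" "v \<in> V1" using E1 by auto
    then have "(f u, f v) \<in> E2" "e = (rk2 (f u), rk2 (f v))" using uv edges rank by auto
    then show "e \<in> map_prod rk2 rk2 ` E2" by (simp add: rev_image_eqI)
  next
    fix e assume "e \<in> map_prod rk2 rk2 ` E2"
    then obtain u v where "(f u, f v) \<in> E2" "e = (rk2 (f u), rk2 (f v))" "u \<in> V1" "v \<in> V1"
      using E2 fV by fastforce
    then show "e \<in> map_prod rk1 rk1 ` E1" using edges rank by force
  qed
  then show ?thesis
    using bij_betw_same_card[OF f] unfolding canonical_def by simp
qed

lemma canonical_eq_imp_rt_iso: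
  assumes rk1: "bij_betw rk1 V1 {0..<card V1}" and rk2: "bij_betw rk2 V2 {0..<card V2}"
    and E1: "E1 \<subseteq> V1 \<times> V1" and E2: "E2 \<subseteq> V2 \<times> V2"
    and eq: "canonical (V1, E1, rk1) = canonical (V2, E2, rk2)"
  shows "rt_iso (V1, E1, rk1) (V2, E2, rk2)"
proof -
  from eq have card: "card V1 = card V2" and M: "map_prod rk1 rk1 ` E1 = map_prod rk2 rk2 ` E2"
    unfolding canonical_def by (auto dest: arg_cong[of _ _ "\<lambda>A. card A"])
  define f where "f = inv_into V2 rk2 \<circ> rk1"
  have f: "bij_betw f V1 V2"
    unfolding f_def using bij_betw_trans[OF rk1] bij_betw_inv_into[OF rk2] card by simp
  have rank: "rk2 (f u) = rk1 u" if "u \<in> V1" for u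
  proof -
    have "rk1 u \<in> rk2 ` V2" using that rk1 rk2 card by (auto simp: bij_betw_def)
    then show ?thesis unfolding f_def by (simp add: f_inv_into_f)
  qed
  note edge1 = map_prod_mem_image_iff[OF bij_betw_imp_inj_on[OF rk1] E1]
  note edge2 = map_prod_mem_image_iff[OF bij_betw_imp_inj_on[OF rk2] E2]
  have "(u, v) \<in> E1 \<longleftrightarrow> (f u, f v) \<in> E2" if "u \<in> V1" "v \<in> V1" for u v
    using edge1[OF that] edge2[OF bij_betwE[OF f, rule_format, OF that(1)]
        bij_betwE[OF f, rule_format, OF that(2)]] M rank that by simp
  then show ?thesis
    unfolding rt_iso_def using f rank by auto
qed

lemma rt_iso_iff_canonical_eq:
  assumes "fhrts n (V1, E1, rk1)" and "fhrts n (V2, E2, rk2)"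
  shows "rt_iso (V1, E1, rk1) (V2, E2, rk2) \<longleftrightarrow> canonical (V1, E1, rk1) = canonical (V2, E2, rk2)"
proof -
  have wf: "bij_betw rk1 V1 {0..<card V1}" "bij_betw rk2 V2 {0..<card V2}"
    "E1 \<subseteq> V1 \<times> V1" "E2 \<subseteq> V2 \<times> V2" using assms unfolding fhrts_def by auto
  show ?thesis using rt_iso_imp_canonical_eq[OF wf] canonical_eq_imp_rt_iso[OF wf] by (rule iffI)
qed

lemma card_quotient_kernel:
  "card (A // {(x, y). x \<in> A \<and> y \<in> A \<and> f x = f y}) = card (f ` A)"
proof -
  let ?R = "{(x, y). x \<in> A \<and> y \<in> A \<and> f x = f y}"
  let ?fibre = "\<lambda>b. {y\<in>A. f y = b}"
  have "A // ?R = (\<lambda>x. ?R `` {x}) ` A" unfolding quotient_def by (rule UNION_singleton_eq_range)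
  also have "\<dots> = ?fibre ` f ` A" unfolding image_image by (rule image_cong) auto
  finally have "bij_betw ?fibre (f ` A) (A // ?R)"
    by (intro bij_betw_imageI inj_onI) blast+
  then show ?thesis by (simp add: bij_betw_same_card)
qed

lemma K_eq_increasing_tree_count:
  assumes "1 \<le> n"
  shows "K n = increasing_tree_count (2 * n - 1)"
proof -
  let ?F = "{T. fhrts n T}"
  define m where "m = 2 * n - 1"
  have "{(S, T). fhrts n S \<and> fhrts n T \<and> rt_iso S T} =
      {(S, T). S \<in> ?F \<and> T \<in> ?F \<and> canonical S = canonical T}"
    using rt_iso_iff_canonical_eq by fastforce
  then have "K n = card (canonical ` ?F)"
    unfolding K_def using card_quotient_kernel[of ?F canonical] by simp
  also have "canonical ` ?F = (\<lambda>E. ({0..<m}, E, id)) ` {E. increasing_tree {0..<m} E n}"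
  proof (intro equalityI subsetI)
    fix C assume "C \<in> canonical ` ?F"
    then obtain V E rk where T: "fhrts n (V, E, rk)" and C: "C = canonical (V, E, rk)" by auto
    have "increasing_tree {0..<card V} (map_prod rk rk ` E) n" by (rule fhrts_imp_increasing_tree[OF T])
    moreover from this have "card V = m" unfolding m_def using increasing_tree_card by fastforce
    ultimately show "C \<in> (\<lambda>E. ({0..<m}, E, id)) ` {E. increasing_tree {0..<m} E n}"
      unfolding C canonical_def by auto
  next
    fix C :: rtree assume "C \<in> (\<lambda>E. ({0..<m}, E, id)) ` {E. increasing_tree {0..<m} E n}"
    then have "C \<in> ?F" "canonical C = C" by (auto simp: fhrts_id_iff canonical_def map_prod.id)
    then show "C \<in> canonical ` ?F" by (metis imageI)
  qed
  also have "card \<dots> = card {E. increasing_tree {0..<m} E n}" by (rule card_image) (auto intro: inj_onI)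
  also have "{E. increasing_tree {0..<m} E n} = increasing_trees {..<m}"
  proof -
    have "n' = n" if "increasing_tree {0..<m} E n'" for E n'
      using increasing_tree_card[OF that] assms unfolding m_def by simp
    then show ?thesis unfolding increasing_trees_def atLeast0LessThan[symmetric] by blast
  qed
  finally show ?thesis unfolding increasing_tree_count_def m_def .
qed

lemma sum_atMost_double_eq_sum_odd:
  fixes f :: "nat \<Rightarrow> 'a::comm_monoid_add"
  assumes "\<And>j. even j \<Longrightarrow> f j = 0"
  shows "(\<Sum>j\<le>2 * m. f j) = (\<Sum>l=1..m. f (2 * l - 1))"
proof (induction m)
  case 0
  then show ?case using assms by simp
next
  case (Suc m)
  have "(\<Sum>j\<le>2 * Suc m. f j) = (\<Sum>j\<le>2 * m. f j) + f (2 * m + 1) + f (2 * m + 2)"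
    by (simp add: add.assoc)
  also have "f (2 * m + 2) = 0" using assms by simp
  finally show ?case using Suc by simp
qed

lemma K_recurrence:
  assumes "2 \<le> n"
  shows "2 * K n = (\<Sum>l=1..n-1. ((2*n-2) choose (2*l-1)) * K l * K (n-l))"
proof -
  let ?c = increasing_tree_count
  have n: "2 * n - 1 = Suc (2 * (n - 1))" "2 * n - 2 = 2 * (n - 1)" using assms by auto
  have "2 * K n = 2 * ?c (Suc (2 * (n - 1)))" using K_eq_increasing_tree_count assms n by simp
  also have "\<dots> = (\<Sum>j\<le>2 * (n - 1). (2 * (n - 1) choose j) * (?c j * ?c (2 * (n - 1) - j)))"
    using increasing_tree_count_Suc assms by simp
  also have "\<dots> = (\<Sum>l=1..n-1. (2 * (n - 1) choose (2*l-1)) * (?c (2*l-1) * ?c (2 * (n - 1) - (2*l-1))))"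
    by (rule sum_atMost_double_eq_sum_odd) (simp add: increasing_tree_count_even)
  also have "\<dots> = (\<Sum>l=1..n-1. ((2*n-2) choose (2*l-1)) * K l * K (n-l))"
  proof (rule sum.cong[OF refl])
    fix l assume "l \<in> {1..n-1}"
    then have "K l = ?c (2*l-1)" "K (n-l) = ?c (2 * (n - 1) - (2*l-1))"
      using K_eq_increasing_tree_count[of l] K_eq_increasing_tree_count[of "n-l"]
      by (auto simp: algebra_simps)
    then show "(2 * (n - 1) choose (2*l-1)) * (?c (2*l-1) * ?c (2 * (n - 1) - (2*l-1))) =
        ((2*n-2) choose (2*l-1)) * K l * K (n-l)" by (simp add: n)
  qed
  finally show ?thesis .
qed

theorem proposition2:
  shows "K 1 = 1 \<and> K 2 = 1 \<and>
    (\<forall>n\<ge>3. real (K n) =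
       1/2 * (\<Sum>l=1..n-1. real ((2*n-2) choose (2*l-1)) * real (K l) * real (K (n-l))))"
proof (intro conjI allI impI)
  show K1: "K 1 = 1"
    using K_eq_increasing_tree_count[of 1] increasing_tree_count_one by simp
  show "K 2 = 1" using K_recurrence[of 2] K1 by simp
  fix n :: nat assume "3 \<le> n"
  then have "real (2 * K n) = real (\<Sum>l=1..n-1. ((2*n-2) choose (2*l-1)) * K l * K (n-l))"
    using K_recurrence[of n] by simp
  then show "real (K n) =
      1/2 * (\<Sum>l=1..n-1. real ((2*n-2) choose (2*l-1)) * real (K l) * real (K (n-l)))"
    by (simp add: of_nat_sum)
qed

end
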